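(* Consider the ride-hailing model in the context. For any mixed-fleet equilibrium $(\bm x^A,\bm w^A,\bm x^C,\bm w^C)$, the tuple $(\bm x^A,\bm 0,\bm x^C,\bm w^C)$ is also a mixed-fleet equilibrium, and it generates the same platform profit.
   Context: Model. There are $L$ regions $\{1,\dots,L\}$. For regions $i,j$, $b_{ij}\ge0$ is the customer rate from $i$ to $j$; $b_i=\sum_j b_{ij}$ (assumed $>0$), $q_{ij}=b_{ij}/b_i$. Travel times satisfy $t_{ij}>0$ for $i\ne j$, $t_{ii}=0$. Constants: $p>0$, $c\ge0$, $R\in(0,1)$, $N>0$, $M\ge0$. For $i,\alpha$: $\tau^{dr}_{i\alpha}=t_{i\alpha}+\sum_j q_{\alpha j}t_{\alpha j}$, $r^A_{i\alpha}=p\sum_j q_{\alpha j}t_{\alpha j}-c\tau^{dr}_{i\alpha}$, $r^C_{i\alpha}=p(1-R)\sum_j q_{\alpha j}t_{\alpha j}-c\tau^{dr}_{i\alpha}$, $r^{C2P}_{i\alpha}=pR\sum_j q_{\alpha j}t_{\alpha j}$. A matrix $\bm x\in\mathbb R^{L\times L}_{\ge0}$ satisfies flow balance if $\sum_j(\sum_k x_{kj})q_{ji}=\sum_\alpha x_{i\alpha}$ for all $i$. Mixed-fleet equilibrium: a tuple $(\bm x^A,\bm w^A,\bm x^C,\bm w^C)$ with $\bm x^A,\bm x^C\in\mathbb R^{L\times L}_{\ge0}$, $\bm w^A,\bm w^C\in\mathbb R^L_{\ge0}$ such that (i) $\sum_j(x^A_{ji}+x^C_{ji})\le b_i$ for all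 $i$; $\bm x^A,\bm x^C$ satisfy flow balance; $\sum_{i,\alpha}(\tau^{dr}_{i\alpha}+w^A_\alpha)x^A_{i\alpha}\le M$ and $\sum_{i,\alpha}(\tau^{dr}_{i\alpha}+w^C_\alpha)x^C_{i\alpha}=N$; (ii) $\bm x^C$ maximizes $\sum_{i,\alpha}r^C_{i\alpha}x_{i\alpha}$ over all $\bm x\ge0$ satisfying flow balance and $\sum_{i,\alpha}(\tau^{dr}_{i\alpha}+w^C_\alpha)x_{i\alpha}=N$; (iii) the platform profit $\sum_{i,\alpha}r^A_{i\alpha}x^A_{i\alpha}+\sum_{i,\alpha}r^{C2P}_{i\alpha}x^C_{i\alpha}$ is maximal among all tuples satisfying (i) and (ii). *)

theory Defs
  imports Main "HOL-Library.Set_Algebras" Complex_Main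
begin

text \<open>Regions are the elements of a finite type 'r (playing the role of {1..L}).
  Rates b i j, travel times t i j, matrices x i j, vectors w i.\<close>

definition brate :: "('r::finite \<Rightarrow> 'r \<Rightarrow> real) \<Rightarrow> 'r \<Rightarrow> real" where
  "brate b i = (\<Sum>j\<in>UNIV. b i j)"

definition qprob :: "('r::finite \<Rightarrow> 'r \<Rightarrow> real) \<Rightarrow> 'r \<Rightarrow> 'r \<Rightarrow> real" where
  "qprob b i j = b i j / brate b i"

definition avg_trip :: "('r::finite \<Rightarrow> 'r \<Rightarrow> real) \<Rightarrow> ('r \<Rightarrow> 'r \<Rightarrow> real) \<Rightarrow> 'r \<Rightarrow> real" where
  "avg_trip b t \<alpha> = (\<Sum>j\<in>UNIV. qprob b \<alpha> j * t \<alpha> j)"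

definition tau_dr :: "('r::finite \<Rightarrow> 'r \<Rightarrow> real) \<Rightarrow> ('r \<Rightarrow> 'r \<Rightarrow> real) \<Rightarrow> 'r \<Rightarrow> 'r \<Rightarrow> real" where
  "tau_dr b t i \<alpha> = t i \<alpha> + avg_trip b t \<alpha>"

definition rA :: "real \<Rightarrow> real \<Rightarrow> ('r::finite \<Rightarrow> 'r \<Rightarrow> real) \<Rightarrow> ('r \<Rightarrow> 'r \<Rightarrow> real) \<Rightarrow> 'r \<Rightarrow> 'r \<Rightarrow> real" where
  "rA p c b t i \<alpha> = p * avg_trip b t \<alpha> - c * tau_dr b t i \<alpha>"

definition rC :: "real \<Rightarrow> real \<Rightarrow> real \<Rightarrow> ('r::finite \<Rightarrow> 'r \<Rightarrow> real) \<Rightarrow> ('r \<Rightarrow> 'r \<Rightarrow> real) \<Rightarrow> 'r \<Rightarrow> 'r \<Rightarrow> real" where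
  "rC p c R b t i \<alpha> = p * (1 - R) * avg_trip b t \<alpha> - c * tau_dr b t i \<alpha>"

definition rC2P :: "real \<Rightarrow> real \<Rightarrow> ('r::finite \<Rightarrow> 'r \<Rightarrow> real) \<Rightarrow> ('r \<Rightarrow> 'r \<Rightarrow> real) \<Rightarrow> 'r \<Rightarrow> 'r \<Rightarrow> real" where
  "rC2P p R b t i \<alpha> = p * R * avg_trip b t \<alpha>"

definition flow_balance :: "('r::finite \<Rightarrow> 'r \<Rightarrow> real) \<Rightarrow> ('r \<Rightarrow> 'r \<Rightarrow> real) \<Rightarrow> bool" where
  "flow_balance b x \<longleftrightarrow>
     (\<forall>i. (\<Sum>j\<in>UNIV. (\<Sum>k\<in>UNIV. x k j) * qprob b j i) = (\<Sum>\<alpha>\<in>UNIV. x i \<alpha>))"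

definition fleet_time :: "('r::finite \<Rightarrow> 'r \<Rightarrow> real) \<Rightarrow> ('r \<Rightarrow> 'r \<Rightarrow> real) \<Rightarrow> ('r \<Rightarrow> real) \<Rightarrow> ('r \<Rightarrow> 'r \<Rightarrow> real) \<Rightarrow> real" where
  "fleet_time b t w x = (\<Sum>i\<in>UNIV. \<Sum>\<alpha>\<in>UNIV. (tau_dr b t i \<alpha> + w \<alpha>) * x i \<alpha>)"

definition nonneg_mat :: "('r \<Rightarrow> 'r \<Rightarrow> real) \<Rightarrow> bool" where
  "nonneg_mat x \<longleftrightarrow> (\<forall>i j. 0 \<le> x i j)"

definition nonneg_vec :: "('r \<Rightarrow> real) \<Rightarrow> bool" where
  "nonneg_vec w \<longleftrightarrow> (\<forall>i. 0 \<le> w i)"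

definition tuple_dom :: "('r \<Rightarrow> 'r \<Rightarrow> real) \<Rightarrow> ('r \<Rightarrow> real) \<Rightarrow> ('r \<Rightarrow> 'r \<Rightarrow> real) \<Rightarrow> ('r \<Rightarrow> real) \<Rightarrow> bool" where
  "tuple_dom xA wA xC wC \<longleftrightarrow> nonneg_mat xA \<and> nonneg_vec wA \<and> nonneg_mat xC \<and> nonneg_vec wC"

definition cond_i :: "('r::finite \<Rightarrow> 'r \<Rightarrow> real) \<Rightarrow> ('r \<Rightarrow> 'r \<Rightarrow> real) \<Rightarrow> real \<Rightarrow> real \<Rightarrow>
    ('r \<Rightarrow> 'r \<Rightarrow> real) \<Rightarrow> ('r \<Rightarrow> real) \<Rightarrow> ('r \<Rightarrow> 'r \<Rightarrow> real) \<Rightarrow> ('r \<Rightarrow> real) \<Rightarrow> bool" where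
  "cond_i b t N M xA wA xC wC \<longleftrightarrow>
     (\<forall>i. (\<Sum>j\<in>UNIV. xA j i + xC j i) \<le> brate b i) \<and>
     flow_balance b xA \<and> flow_balance b xC \<and>
     fleet_time b t wA xA \<le> M \<and> fleet_time b t wC xC = N"

definition cond_ii :: "real \<Rightarrow> real \<Rightarrow> real \<Rightarrow> ('r::finite \<Rightarrow> 'r \<Rightarrow> real) \<Rightarrow> ('r \<Rightarrow> 'r \<Rightarrow> real) \<Rightarrow> real \<Rightarrow>
    ('r \<Rightarrow> 'r \<Rightarrow> real) \<Rightarrow> ('r \<Rightarrow> real) \<Rightarrow> bool" where
  "cond_ii p c R b t N xC wC \<longleftrightarrow>
     (\<forall>x. nonneg_mat x \<and> flow_balance b x \<and> fleet_time b t wC x = N \<longrightarrow>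
        (\<Sum>i\<in>UNIV. \<Sum>\<alpha>\<in>UNIV. rC p c R b t i \<alpha> * x i \<alpha>)
          \<le> (\<Sum>i\<in>UNIV. \<Sum>\<alpha>\<in>UNIV. rC p c R b t i \<alpha> * xC i \<alpha>))"

definition platform_profit :: "real \<Rightarrow> real \<Rightarrow> real \<Rightarrow> ('r::finite \<Rightarrow> 'r \<Rightarrow> real) \<Rightarrow> ('r \<Rightarrow> 'r \<Rightarrow> real) \<Rightarrow>
    ('r \<Rightarrow> 'r \<Rightarrow> real) \<Rightarrow> ('r \<Rightarrow> 'r \<Rightarrow> real) \<Rightarrow> real" where
  "platform_profit p c R b t xA xC =
     (\<Sum>i\<in>UNIV. \<Sum>\<alpha>\<in>UNIV. rA p c b t i \<alpha> * xA i \<alpha>) +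
     (\<Sum>i\<in>UNIV. \<Sum>\<alpha>\<in>UNIV. rC2P p R b t i \<alpha> * xC i \<alpha>)"

definition mixed_fleet_eq :: "real \<Rightarrow> real \<Rightarrow> real \<Rightarrow> ('r::finite \<Rightarrow> 'r \<Rightarrow> real) \<Rightarrow> ('r \<Rightarrow> 'r \<Rightarrow> real) \<Rightarrow>
    real \<Rightarrow> real \<Rightarrow> ('r \<Rightarrow> 'r \<Rightarrow> real) \<Rightarrow> ('r \<Rightarrow> real) \<Rightarrow> ('r \<Rightarrow> 'r \<Rightarrow> real) \<Rightarrow> ('r \<Rightarrow> real) \<Rightarrow> bool" where
  "mixed_fleet_eq p c R b t N M xA wA xC wC \<longleftrightarrow>
     tuple_dom xA wA xC wC \<and> cond_i b t N M xA wA xC wC \<and> cond_ii p c R b t N xC wC \<and>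
     (\<forall>xA' wA' xC' wC'.
        tuple_dom xA' wA' xC' wC' \<and> cond_i b t N M xA' wA' xC' wC' \<and> cond_ii p c R b t N xC' wC'
        \<longrightarrow> platform_profit p c R b t xA' xC' \<le> platform_profit p c R b t xA xC)"

end

theory Submission
  imports Defs
begin

(* The waiting times wA of the autonomous fleet enter the equilibrium conditions only through
   the budget constraint fleet_time b t wA xA \<le> M: condition (ii) and the platform profit do not
   mention wA at all. Since xA \<ge> 0, fleet time is monotone in the waiting times, so replacing wA
   by 0 keeps the budget satisfied and leaves everything else unchanged. *)

lemma fleet_time_mono_waiting:
  assumes "nonneg_mat x" and "\<And>\<alpha>. w \<alpha> \<le> w' \<alpha>"
  shows "fleet_time b t w x \<le> fleet_time b t w' x"
  unfolding fleet_time_def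
proof (intro sum_mono)
  fix i \<alpha>
  show "(tau_dr b t i \<alpha> + w \<alpha>) * x i \<alpha> \<le> (tau_dr b t i \<alpha> + w' \<alpha>) * x i \<alpha>"
    using assms unfolding nonneg_mat_def by (intro mult_right_mono) auto
qed

lemma cond_i_zero_waiting:
  assumes "cond_i b t N M xA wA xC wC" and "nonneg_mat xA" and "nonneg_vec wA"
  shows "cond_i b t N M xA (\<lambda>_. 0) xC wC"
proof -
  have "fleet_time b t (\<lambda>_. 0) xA \<le> fleet_time b t wA xA"
    using assms(2,3) unfolding nonneg_vec_def by (intro fleet_time_mono_waiting) auto
  then show ?thesis using assms(1) unfolding cond_i_def by auto
qed

theorem lemma1:
  fixes b t :: "'r::finite \<Rightarrow> 'r \<Rightarrow> real"
    and p c R N M :: real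
    and xA xC :: "'r \<Rightarrow> 'r \<Rightarrow> real" and wA wC :: "'r \<Rightarrow> real"
  assumes b_nonneg: "\<And>i j. 0 \<le> b i j"
    and b_pos: "\<And>i. 0 < brate b i"
    and t_pos: "\<And>i j. i \<noteq> j \<Longrightarrow> 0 < t i j"
    and t_diag: "\<And>i. t i i = 0"
    and p_pos: "0 < p" and c_nonneg: "0 \<le> c"
    and R_pos: "0 < R" and R_lt1: "R < 1"
    and N_pos: "0 < N" and M_nonneg: "0 \<le> M"
    and eq: "mixed_fleet_eq p c R b t N M xA wA xC wC"
  shows "mixed_fleet_eq p c R b t N M xA (\<lambda>_. 0) xC wC \<and>
         platform_profit p c R b t xA xC = platform_profit p c R b t xA xC"
proof -
  have dom: "tuple_dom xA wA xC wC" and ci: "cond_i b t N M xA wA xC wC"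
    using eq unfolding mixed_fleet_eq_def by auto
  then have "cond_i b t N M xA (\<lambda>_. 0) xC wC"
    unfolding tuple_dom_def by (blast intro: cond_i_zero_waiting)
  moreover have "tuple_dom xA (\<lambda>_. 0) xC wC"
    using dom unfolding tuple_dom_def nonneg_vec_def by auto
  ultimately show ?thesis using eq unfolding mixed_fleet_eq_def by blast
qed

end
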